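(* Let $p\ge5$ be a prime. Then \[ \sum_{j=2}^{p-3}B_j\equiv-\frac32\pmod p . \]
   Context: $B_j$ is the $j$th Bernoulli number ($\frac{t}{e^t-1}=\sum_{m\ge0}B_m\frac{t^m}{m!}$). For rationals whose denominators are coprime to $p$, $a\equiv b\pmod p$ means $a-b$ is $p$ times a rational with denominator coprime to $p$. *)

theory Defs
  imports Complex_Main "HOL-Computational_Algebra.Primes"
begin

text \<open>Bernoulli numbers with the convention t/(e^t - 1) = sum B_m t^m/m!, so B_1 = -1/2,
  defined by the standard recurrence sum_{k=0}^{n} (n+1 choose k) B_k = 0 for n >= 1.\<close>
fun bernoulli :: "nat \<Rightarrow> rat" where
  "bernoulli n = (if n = 0 then 1 else
     - (\<Sum>k<n. of_nat ((n + 1) choose k) * (if k < n then bernoulli k else 0))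
       / of_nat (n + 1))"

definition rat_cong :: "rat \<Rightarrow> rat \<Rightarrow> int \<Rightarrow> bool" where
  "rat_cong a b p \<longleftrightarrow>
     (\<exists>r. a - b = of_int p * r \<and> coprime (snd (quotient_of r)) p)"

lemma bernoulli_rec:
  "n > 0 \<Longrightarrow> bernoulli n = - (\<Sum>k<n. of_nat ((n + 1) choose k) * bernoulli k) / of_nat (n + 1)"
  by simp

end

theory Submission
  imports Defs "HOL-Computational_Algebra.Formal_Power_Series" "HOL-Number_Theory.Cong"
begin

(* The Bernoulli recurrence for n = p - 2 reads sum_{k <= p-2} C(p-1,k) B_k = 0, and
   C(p-1,k) == (-1)^k (mod p).  As B_0, ..., B_{p-2} are p-integral (their recurrence only
   divides by 2, ..., p - 1), this gives sum_{k <= p-2} (-1)^k B_k == 0 (mod p).  The reflection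
   B(-X) = B(X) + X of the generating function B(X) = X / (e^X - 1) shows (-1)^k B_k = B_k for
   k <> 1, in particular B_{p-2} = 0, so the alternating sum is 1 + 1/2 + sum_{j=2}^{p-3} B_j. *)

declare bernoulli.simps[simp del]

definition p_integral :: "int \<Rightarrow> rat \<Rightarrow> bool" where
  "p_integral p r \<longleftrightarrow> (\<exists>a b. b \<noteq> 0 \<and> r = of_int a / of_int b \<and> coprime b p)"

lemma p_integral_imp_coprime_denom:
  assumes "p_integral p r"
  shows "coprime (snd (quotient_of r)) p"
proof -
  obtain a b where "b \<noteq> 0" and r: "r = of_int a / of_int b" and "coprime b p"
    using assms unfolding p_integral_def by blast
  obtain n d where q: "quotient_of r = (n, d)" by (cases "quotient_of r")
  have "d > 0" and "coprime n d" and "r = of_int n / of_int d"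
    using quotient_of_denom_pos[OF q] quotient_of_coprime[OF q] quotient_of_div[OF q] by auto
  with r \<open>b \<noteq> 0\<close> have "n * b = a * d"
    by (simp add: field_simps flip: of_int_mult of_int_eq_iff)
  then have "d dvd n * b" by (metis dvd_triv_right)
  with \<open>coprime n d\<close> have "d dvd b"
    by (simp add: coprime_commute coprime_dvd_mult_right_iff)
  with \<open>coprime b p\<close> have "coprime d p"
    by (rule coprime_divisors[OF _ dvd_refl, rotated])
  then show ?thesis
    by (simp add: q)
qed

lemma p_integral_of_int: "p_integral p (of_int a)"
  unfolding p_integral_def by (rule exI[of _ a], rule exI[of _ 1]) simp

lemma p_integral_add: "p_integral p x \<Longrightarrow> p_integral p y \<Longrightarrow> p_integral p (x + y)"
proof -
  assume "p_integral p x" "p_integral p y"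
  then obtain a b c d where "b \<noteq> 0" "d \<noteq> 0" "coprime b p" "coprime d p"
    and "x = of_int a / of_int b" "y = of_int c / of_int d"
    unfolding p_integral_def by blast
  then have "x + y = of_int (a * d + c * b) / of_int (b * d)" and "coprime (b * d) p"
    by (simp_all add: field_simps)
  with \<open>b \<noteq> 0\<close> \<open>d \<noteq> 0\<close> show ?thesis
    unfolding p_integral_def by (metis mult_eq_0_iff)
qed

lemma p_integral_mult: "p_integral p x \<Longrightarrow> p_integral p y \<Longrightarrow> p_integral p (x * y)"
proof -
  assume "p_integral p x" "p_integral p y"
  then obtain a b c d where "b \<noteq> 0" "d \<noteq> 0" "coprime b p" "coprime d p"
    and "x = of_int a / of_int b" "y = of_int c / of_int d"
    unfolding p_integral_def by blast
  then have "x * y = of_int (a * c) / of_int (b * d)" and "coprime (b * d) p" and "b * d \<noteq> 0"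
    by simp_all
  then show ?thesis
    unfolding p_integral_def by blast
qed

lemma p_integral_divide:
  assumes "p_integral p x" and "n \<noteq> 0" and "coprime n p"
  shows "p_integral p (x / of_int n)"
proof -
  obtain a b where "b \<noteq> 0" "coprime b p" and "x = of_int a / of_int b"
    using assms(1) unfolding p_integral_def by blast
  with assms(2,3) have "x / of_int n = of_int a / of_int (b * n)" and "coprime (b * n) p"
    and "b * n \<noteq> 0"
    by simp_all
  then show ?thesis
    unfolding p_integral_def by blast
qed

lemma p_integral_minus: "p_integral p x \<Longrightarrow> p_integral p (- x)"
  using p_integral_mult[OF p_integral_of_int[of p "-1"]] by simp

lemma p_integral_sum: "(\<And>k. k \<in> A \<Longrightarrow> p_integral p (f k)) \<Longrightarrow> p_integral p (\<Sum>k\<in>A. f k)"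
  by (induction A rule: infinite_finite_induct)
    (simp_all add: p_integral_add p_integral_of_int[of p 0, simplified])

lemma rat_congI:
  assumes "a - b = of_int p * r" and "p_integral p r"
  shows "rat_cong a b p"
  using assms p_integral_imp_coprime_denom unfolding rat_cong_def by blast

lemma bernoulli_0: "bernoulli 0 = 1"
  by (simp add: bernoulli.simps)

lemma bernoulli_p_integral:
  assumes "prime p" and "n + 1 < p"
  shows "p_integral (int p) (bernoulli n)"
  using assms(2)
proof (induction n rule: less_induct)
  case (less n)
  show ?case
  proof (cases "n = 0")
    case True
    then show ?thesis
      using p_integral_of_int[of "int p" 1] by (simp add: bernoulli_0)
  next
    case False
    have "\<not> p dvd n + 1"
      using less.prems by (auto dest: dvd_imp_le)
    with \<open>prime p\<close> have "coprime (int (n + 1)) (int p)"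
      by (metis prime_imp_coprime coprime_commute coprime_int_iff)
    moreover have "p_integral (int p) (- (\<Sum>k<n. of_nat ((n + 1) choose k) * bernoulli k))"
      using less p_integral_of_int[of "int p" "int _"]
      by (auto intro!: p_integral_minus p_integral_sum p_integral_mult)
    ultimately have "p_integral (int p)
        (- (\<Sum>k<n. of_nat ((n + 1) choose k) * bernoulli k) / of_int (int (n + 1)))"
      by (intro p_integral_divide) simp_all
    then show ?thesis
      using bernoulli_rec[of n] False by (simp only: of_int_of_nat_eq)
  qed
qed

lemma bernoulli_binomial_sum:
  assumes "n > 0"
  shows "(\<Sum>k\<le>n. of_nat ((n + 1) choose k) * bernoulli k) = 0"
  using bernoulli_rec[OF assms]
  by (simp add: lessThan_Suc_atMost[symmetric] field_simps del: of_nat_Suc)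

unbundle fps_syntax

definition bernoulli_fps :: "rat fps" where
  "bernoulli_fps = Abs_fps (\<lambda>n. bernoulli n / fact n)"

definition exp_minus_one_div_X :: "rat fps" where
  "exp_minus_one_div_X = Abs_fps (\<lambda>n. 1 / fact (n + 1))"

lemma fps_X_mult_exp_minus_one_div_X: "fps_X * exp_minus_one_div_X = fps_exp 1 - 1"
proof (rule fps_ext)
  show "(fps_X * exp_minus_one_div_X) $ n = (fps_exp 1 - 1) $ n" for n
    by (cases n) (simp_all add: exp_minus_one_div_X_def algebra_simps)
qed

lemma bernoulli_fps_mult_exp_minus_one_div_X: "bernoulli_fps * exp_minus_one_div_X = 1"
proof (rule fps_ext)
  fix n
  have "(bernoulli_fps * exp_minus_one_div_X) $ n
      = (\<Sum>k\<le>n. of_nat ((n + 1) choose k) * bernoulli k) / fact (n + 1)"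
    unfolding fps_mult_nth atLeast0AtMost sum_divide_distrib
  proof (rule sum.cong)
    fix k assume "k \<in> {..n}"
    then have "Suc n - k = Suc (n - k)" and "k \<le> Suc n" by auto
    then show "bernoulli_fps $ k * exp_minus_one_div_X $ (n - k)
        = of_nat ((n + 1) choose k) * bernoulli k / fact (n + 1)"
      by (simp add: bernoulli_fps_def exp_minus_one_div_X_def binomial_fact)
  qed simp
  also have "\<dots> = 1 $ n"
    using bernoulli_binomial_sum[of n] by (cases "n = 0") (simp_all add: bernoulli_0)
  finally show "(bernoulli_fps * exp_minus_one_div_X) $ n = 1 $ n" .
qed

lemma exp_minus_one_div_X_reflect:
  "(exp_minus_one_div_X oo -fps_X) * fps_exp 1 = exp_minus_one_div_X"
proof -
  have reflected: "-fps_X * (exp_minus_one_div_X oo -fps_X) = fps_exp (-1) - 1"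
    using arg_cong[OF fps_X_mult_exp_minus_one_div_X, of "\<lambda>f. f oo -fps_X"]
    by (simp add: fps_compose_mult_distrib fps_compose_sub_distrib)
  have exp_inverse: "fps_exp (-1) * fps_exp 1 = (1 :: rat fps)"
    by (simp flip: fps_exp_add_mult)
  have "fps_X * ((exp_minus_one_div_X oo -fps_X) * fps_exp 1)
      = - ((-fps_X * (exp_minus_one_div_X oo -fps_X)) * fps_exp 1)"
    by (simp add: algebra_simps)
  also have "\<dots> = - ((fps_exp (-1) - 1) * fps_exp 1)"
    by (simp only: reflected)
  also have "\<dots> = fps_X * exp_minus_one_div_X"
    using exp_inverse by (simp add: fps_X_mult_exp_minus_one_div_X algebra_simps)
  finally show ?thesis
    by simp
qed

lemma bernoulli_fps_reflect: "bernoulli_fps oo -fps_X = bernoulli_fps + fps_X"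
proof -
  have inverse: "(bernoulli_fps oo -fps_X) * (exp_minus_one_div_X oo -fps_X) = 1"
    using arg_cong[OF bernoulli_fps_mult_exp_minus_one_div_X, of "\<lambda>f. f oo -fps_X"]
    by (simp add: fps_compose_mult_distrib)
  have "bernoulli_fps oo -fps_X
      = (bernoulli_fps oo -fps_X) * ((exp_minus_one_div_X oo -fps_X) * fps_exp 1) * bernoulli_fps"
    by (simp add: exp_minus_one_div_X_reflect bernoulli_fps_mult_exp_minus_one_div_X
        mult.assoc mult.commute[of exp_minus_one_div_X])
  also have "\<dots> = (1 + fps_X * exp_minus_one_div_X) * bernoulli_fps"
    by (simp add: inverse fps_X_mult_exp_minus_one_div_X flip: mult.assoc)
  also have "\<dots> = bernoulli_fps + fps_X"
    by (simp add: distrib_right mult.assoc mult.commute[of exp_minus_one_div_X]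
        bernoulli_fps_mult_exp_minus_one_div_X)
  finally show ?thesis .
qed

lemma minus_one_power_mult_bernoulli:
  "(-1) ^ n * bernoulli n = bernoulli n + (if n = 1 then 1 else 0)"
proof -
  have "(bernoulli_fps oo -fps_X) $ n = (bernoulli_fps + fps_X) $ n"
    by (simp only: bernoulli_fps_reflect)
  then have "(-1) ^ n * (bernoulli n / fact n) = bernoulli n / fact n + (if n = 1 then 1 else 0)"
    by (simp add: fps_compose_uminus' bernoulli_fps_def)
  then show ?thesis
    by (auto simp: field_simps split: if_splits)
qed

lemma bernoulli_1: "bernoulli 1 = - 1 / 2"
  using minus_one_power_mult_bernoulli[of 1] by simp

lemma bernoulli_odd_eq_0:
  assumes "odd n" and "n \<noteq> 1"
  shows "bernoulli n = 0"
  using minus_one_power_mult_bernoulli[of n] assms by simp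

lemma binomial_prime_minus_one_cong:
  assumes "prime p" and "k < p"
  shows "[int ((p - 1) choose k) = (-1) ^ k] (mod int p)"
  using assms(2)
proof (induction k)
  case 0
  then show ?case by simp
next
  case (Suc k)
  obtain n where p: "p = Suc n"
    using prime_gt_0_nat[OF \<open>prime p\<close>] gr0_implies_Suc by blast
  have "p dvd (p choose Suc k)"
    using Suc.prems \<open>prime p\<close> by (intro dvd_choose_prime) auto
  then have "[int (p choose Suc k) = 0] (mod int p)"
    by (simp only: cong_0_iff int_dvd_int_iff)
  moreover have "[int (n choose k) = (-1) ^ k] (mod int p)"
    using Suc by (simp add: p)
  ultimately have "[int (p choose Suc k) - int (n choose k) = 0 - (-1) ^ k] (mod int p)"
    by (rule cong_diff)
  moreover have "int (p choose Suc k) - int (n choose k) = int (n choose Suc k)"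
    by (simp add: p)
  ultimately show ?case
    by (simp add: p)
qed

lemma alternating_bernoulli_sum_cong:
  assumes "prime p" and "p \<noteq> 2"
  shows "rat_cong (\<Sum>k\<le>p - 2. (-1) ^ k * bernoulli k) 0 (int p)"
proof -
  define n where "n = p - 2"
  have "p \<ge> 3"
    using assms prime_ge_2_nat[OF \<open>prime p\<close>] by linarith
  then have "p - 1 = n + 1" and "n > 0" and "n + 1 < p"
    by (simp_all add: n_def)
  have "\<forall>k\<in>{..n}. \<exists>q. (-1) ^ k = int ((n + 1) choose k) + int p * q"
    using binomial_prime_minus_one_cong[OF \<open>prime p\<close>] \<open>p - 1 = n + 1\<close> \<open>n + 1 < p\<close>
    by (auto simp: cong_iff_lin simp flip: \<open>p - 1 = n + 1\<close>)
  then obtain q where q: "\<And>k. k \<in> {..n} \<Longrightarrow> (-1) ^ k = int ((n + 1) choose k) + int p * q k"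
    by (metis bchoice)
  have "(-1) ^ k * bernoulli k
      = of_nat ((n + 1) choose k) * bernoulli k + of_int p * (of_int (q k) * bernoulli k)"
    if "k \<in> {..n}" for k
  proof -
    have "(-1) ^ k = (of_int (int ((n + 1) choose k) + int p * q k) :: rat)"
      using arg_cong[OF q[OF that], of "of_int :: int \<Rightarrow> rat"] by simp
    then show ?thesis
      by (simp add: algebra_simps)
  qed
  then have "(\<Sum>k\<le>n. (-1) ^ k * bernoulli k) - 0 = of_int p * (\<Sum>k\<le>n. of_int (q k) * bernoulli k)"
    using bernoulli_binomial_sum[OF \<open>n > 0\<close>] by (simp add: sum.distrib sum_distrib_left)
  moreover have "p_integral p (\<Sum>k\<le>n. of_int (q k) * bernoulli k)"
    using \<open>n + 1 < p\<close>
    by (intro p_integral_sum p_integral_mult p_integral_of_int bernoulli_p_integral[OF \<open>prime p\<close>]) simp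
  ultimately show ?thesis
    unfolding n_def by (rule rat_congI)
qed

theorem mainTheorem15:
  fixes p :: nat
  assumes "prime p" and "p \<ge> 5"
  shows "rat_cong (\<Sum>j = 2..p - 3. bernoulli j) (- 3 / 2) (int p)"
proof -
  have "odd p"
    using prime_odd_nat[OF assms(1)] assms(2) by simp
  have split: "(\<Sum>k\<le>p - 2. f k) = f 0 + f 1 + (\<Sum>k = 2..p - 3. f k) + f (p - 2)"
    for f :: "nat \<Rightarrow> rat"
  proof -
    have "p - 2 = Suc (p - 3)" and "Suc (Suc 0) \<le> p - 3"
      using assms(2) by simp_all
    then show ?thesis
      by (simp add: atMost_atLeast0 sum.atLeast_Suc_atMost numeral_2_eq_2)
  qed
  have "bernoulli (p - 2) = 0"
    using \<open>odd p\<close> assms(2) by (intro bernoulli_odd_eq_0) simp_all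
  moreover have "(\<Sum>k = 2..p - 3. (-1) ^ k * bernoulli k) = (\<Sum>k = 2..p - 3. bernoulli k)"
    by (intro sum.cong) (simp_all add: minus_one_power_mult_bernoulli)
  ultimately have "(\<Sum>k\<le>p - 2. (-1) ^ k * bernoulli k) - 0
      = (\<Sum>j = 2..p - 3. bernoulli j) - (- 3 / 2)"
    unfolding split bernoulli_0 bernoulli_1 by simp
  then show ?thesis
    using alternating_bernoulli_sum_cong[OF assms(1)] assms(2) by (simp add: rat_cong_def)
qed

end
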